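(* Let $\lambda,\mu$ be strict partitions with $\mu\subseteq\lambda$ such that the shifted skew diagram $\widetilde{\lambda/\mu}$ has $n$ boxes and contains the three boxes $(i,j)$, $(i,j+1)$ and $(i+1,j+1)$ for some $i,j$. Write $Q_{\lambda/\mu}=\sum_{\nu\in OP(n)}a_\nu p_\nu$. Then $\sum_{\nu\in OP(n)}a_\nu=0$.
   Context: For strict partitions $\mu\subseteq\lambda$, the shifted skew diagram $\widetilde{\lambda/\mu}$ is the set of boxes $(r,c)$ with $1\le r\le\ell(\lambda)$ and $r+\mu_r\le c\le r+\lambda_r-1$ (with $\mu_r=0$ for $r>\ell(\mu)$); $(r,c)$ means row $r$ (rows numbered top to bottom) and column $c$. Let $\mathbf{P}'=\{1'<1<2'<2<\cdots\}$; $|a|$ denotes the unmarked version of $a$. A marked shifted tableau of shape $\widetilde{\lambda/\mu}$ is a filling of its boxes by letters of $\mathbf{P}'$ such that rows and columns weakly increase, each column contains at most one unmarked $k$ and each row at most one marked $k'$ for each $k$. Its content is $(c_1,c_2,\dots)$ with $c_i$ the number of entries $a$ with $|a|=i$. The skew Schur $Q$-function is $Q_{\lambda/\mu}=\sum_T x^{c(T)}$ over all such tableaux; it lies in $\Gamma=\mathbb{Q}[p_1,p_3,\dots]$ and so expands in $\{p_\nu:\nu\in OP(n)\}$, $OP(n)$ being the partitions of $n$ into odd parts. *)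

theory Defs
  imports Complex_Main
begin

definition part :: "nat list \<Rightarrow> nat \<Rightarrow> nat" where
  "part lam r = (if 1 \<le> r \<and> r \<le> length lam then lam ! (r - 1) else 0)"

definition strict_partition :: "nat list \<Rightarrow> bool" where
  "strict_partition lam \<longleftrightarrow> sorted_wrt (>) lam \<and> (\<forall>k\<in>set lam. 0 < k)"

definition subpartition :: "nat list \<Rightarrow> nat list \<Rightarrow> bool" where
  "subpartition mu lam \<longleftrightarrow> length mu \<le> length lam \<and> (\<forall>r. part mu r \<le> part lam r)"

definition shifted_skew :: "nat list \<Rightarrow> nat list \<Rightarrow> (nat \<times> nat) set" where
  "shifted_skew lam mu =
     {(r, c). 1 \<le> r \<and> r \<le> length lam \<and> r + part mu r \<le> c \<and> c < r + part lam r}"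

(* Letters of P' = {1' < 1 < 2' < 2 < ...} are encoded as positive naturals:
   k' is encoded as 2k-1 (odd), k as 2k (even); the order is preserved. *)
definition marked :: "nat \<Rightarrow> bool" where
  "marked v \<longleftrightarrow> odd v"

definition unmark :: "nat \<Rightarrow> nat" where
  "unmark v = (v + 1) div 2"

definition marked_shifted_tableaux :: "nat list \<Rightarrow> nat list \<Rightarrow> nat \<Rightarrow> ((nat \<times> nat) \<Rightarrow> nat) set" where
  "marked_shifted_tableaux lam mu N =
    {T. let D = shifted_skew lam mu in
        (\<forall>p. p \<notin> D \<longrightarrow> T p = 0)
      \<and> (\<forall>p\<in>D. 1 \<le> T p \<and> unmark (T p) \<le> N)
      \<and> (\<forall>r c c'. (r, c) \<in> D \<longrightarrow> (r, c') \<in> D \<longrightarrow> c \<le> c' \<longrightarrow> T (r, c) \<le> T (r, c'))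
      \<and> (\<forall>r r' c. (r, c) \<in> D \<longrightarrow> (r', c) \<in> D \<longrightarrow> r \<le> r' \<longrightarrow> T (r, c) \<le> T (r', c))
      \<and> (\<forall>r r' c. (r, c) \<in> D \<longrightarrow> (r', c) \<in> D \<longrightarrow> r \<noteq> r' \<longrightarrow>
             \<not> (T (r, c) = T (r', c) \<and> \<not> marked (T (r, c))))
      \<and> (\<forall>r c c'. (r, c) \<in> D \<longrightarrow> (r, c') \<in> D \<longrightarrow> c \<noteq> c' \<longrightarrow>
             \<not> (T (r, c) = T (r, c') \<and> marked (T (r, c))))}"

(* Q_{lam/mu} evaluated at x_1,...,x_N (all other variables set to 0):
   sum over tableaux of x^{content(T)} = prod over boxes of x_{|T(box)|} *)
definition skew_Q :: "nat list \<Rightarrow> nat list \<Rightarrow> nat \<Rightarrow> (nat \<Rightarrow> real) \<Rightarrow> real" where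
  "skew_Q lam mu N x =
     (\<Sum>T\<in>marked_shifted_tableaux lam mu N. \<Prod>p\<in>shifted_skew lam mu. x (unmark (T p)))"

definition power_sum :: "nat \<Rightarrow> nat \<Rightarrow> (nat \<Rightarrow> real) \<Rightarrow> real" where
  "power_sum N k x = (\<Sum>i=1..N. x i ^ k)"

definition power_sum_part :: "nat \<Rightarrow> nat list \<Rightarrow> (nat \<Rightarrow> real) \<Rightarrow> real" where
  "power_sum_part N nu x = (\<Prod>k\<leftarrow>nu. power_sum N k x)"

definition odd_partitions :: "nat \<Rightarrow> nat list set" where
  "odd_partitions n = {nu. sorted_wrt (\<ge>) nu \<and> (\<forall>k\<in>set nu. odd k) \<and> sum_list nu = n}"

end

theory Submission
  imports Defs
begin

(* Setting x_1 = 1 and all other variables to 0 turns every p_nu into 1, so the sum of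
   the a_nu is the number of marked shifted tableaux with all entries in {1',1}.
   There is none: in the hook (i,j), (i,j+1), (i+1,j+1) the middle entry can be neither 1'
   (its left neighbour would be a second 1' in its row) nor 1 (the entry below it would be
   a second 1 in its column). *)

lemma power_sum_part_const_one: "power_sum_part N nu (\<lambda>_. 1) = real N ^ length nu"
  unfolding power_sum_part_def power_sum_def by (induction nu) auto

lemma skew_Q_const_one: "skew_Q lam mu N (\<lambda>_. 1) = real (card (marked_shifted_tableaux lam mu N))"
  unfolding skew_Q_def by simp

lemma marked_shifted_tableaux_row:
  assumes "T \<in> marked_shifted_tableaux lam mu N"
    and "(r, c) \<in> shifted_skew lam mu" and "(r, c + 1) \<in> shifted_skew lam mu"
  shows "T (r, c) \<le> T (r, c + 1)" and "T (r, c) = T (r, c + 1) \<Longrightarrow> \<not> marked (T (r, c))"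
  using assms unfolding marked_shifted_tableaux_def Let_def by auto

lemma marked_shifted_tableaux_column:
  assumes "T \<in> marked_shifted_tableaux lam mu N"
    and "(r, c) \<in> shifted_skew lam mu" and "(r + 1, c) \<in> shifted_skew lam mu"
  shows "T (r, c) \<le> T (r + 1, c)" and "T (r, c) = T (r + 1, c) \<Longrightarrow> marked (T (r, c))"
  using assms unfolding marked_shifted_tableaux_def Let_def by auto

lemma marked_shifted_tableaux_one_letter:
  assumes "T \<in> marked_shifted_tableaux lam mu 1" and "p \<in> shifted_skew lam mu"
  shows "T p = 1 \<or> T p = 2"
  using assms unfolding marked_shifted_tableaux_def Let_def unmark_def by fastforce

lemma marked_shifted_tableaux_one_letter_empty:
  assumes "(i, j) \<in> shifted_skew lam mu" and "(i, j + 1) \<in> shifted_skew lam mu"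
    and "(i + 1, j + 1) \<in> shifted_skew lam mu"
  shows "marked_shifted_tableaux lam mu 1 = {}"
proof (rule equals0I)
  fix T assume T: "T \<in> marked_shifted_tableaux lam mu 1"
  note row = marked_shifted_tableaux_row[OF T assms(1,2)]
  note column = marked_shifted_tableaux_column[OF T assms(2,3)]
  note letters = marked_shifted_tableaux_one_letter[OF T]
  show False
  proof (cases "T (i, j + 1) = 1")
    case True
    then have "T (i, j) = 1" using row(1) letters[OF assms(1)] by auto
    then show False using row(2) True by (simp add: marked_def)
  next
    case False
    then have "T (i, j + 1) = 2" using letters[OF assms(2)] by blast
    moreover have "T (i + 1, j + 1) = 2" using calculation column(1) letters[OF assms(3)] by auto
    ultimately show False using column(2) by (simp add: marked_def)
  qed
qed

theorem mainTheorem7: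
  fixes lam mu :: "nat list" and n i j :: nat and a :: "nat list \<Rightarrow> real"
  assumes "strict_partition lam" and "strict_partition mu" and "subpartition mu lam"
    and "card (shifted_skew lam mu) = n"
    and "(i, j) \<in> shifted_skew lam mu" and "(i, j + 1) \<in> shifted_skew lam mu"
    and "(i + 1, j + 1) \<in> shifted_skew lam mu"
    and expansion: "\<forall>N (x :: nat \<Rightarrow> real).
           skew_Q lam mu N x = (\<Sum>nu\<in>odd_partitions n. a nu * power_sum_part N nu x)"
  shows "(\<Sum>nu\<in>odd_partitions n. a nu) = 0"
proof -
  have "(\<Sum>nu\<in>odd_partitions n. a nu) = skew_Q lam mu 1 (\<lambda>_. 1)"
    using expansion by (simp add: power_sum_part_const_one)
  also have "\<dots> = 0"
    using marked_shifted_tableaux_one_letter_empty[OF assms(5-7)] by (simp add: skew_Q_const_one)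
  finally show ?thesis .
qed

end
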